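(* In the two-block setting, suppose Assumptions 1 and 2 hold. Let $\{y^{k+1},s^{k+1},x^{k+1}\}_{k\ge0}$ be generated by Algorithm B from $y^0\in\operatorname{dom}f_1$, $x^0\in\mathbb{X}$, $\sigma>0$, and let $(y^*,s^*,x^* )$ be its limit. Then for all $k\ge0$, $$\|\mathcal{R}(y^{k+1},s^{k+1},x^{k+1})\|\le\frac{1}{k+1}\Big(\frac{\sigma\|B_2^*\|+1}{\sigma}\big(\|x^0-x^*\|+\sigma\|B_1y^0-B_1y^*\|\big)\Big),$$ $$h(y^{k+1},s^{k+1})\ge-\frac{1}{k+1}\Big(\frac{\|x^*\|}{\sigma}\big(\|x^0-x^*\|+\sigma\|B_1y^0-B_1y^*\|\big)\Big),$$ $$h(y^{k+1},s^{k+1})\le\frac{1}{k+1}\cdot\frac{\big(\|x^0-x^*\|+\sigma\|B_1y^0-B_1y^*\|\big)^2+\|x^*\|\big(\|x^0-x^*\|+\sigma\|B_1y^0-B_1y^*\|\big)}{\sigma}.$$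
   Context: Two-block setting: $\mathbb{X},\mathbb{Y},\mathbb{Z}$ are finite-dimensional real Euclidean spaces; $f_1:\mathbb{Y}\to(-\infty,+\infty]$, $f_2:\mathbb{Z}\to(-\infty,+\infty]$ proper closed convex; $B_1:\mathbb{Y}\to\mathbb{X}$, $B_2:\mathbb{Z}\to\mathbb{X}$ linear; $c\in\mathbb{X}$. Problem (P): $\min f_1(y)+f_2(s)$ s.t. $B_1y+B_2s=c$. Dual (D): $\max_x\{-f_1^*(-B_1^*x)-f_2^*(-B_2^*x)-\langle c,x\rangle\}$. $L_\sigma(y,s;x):=f_1(y)+f_2(s)+\langle x,B_1y+B_2s-c\rangle+\frac{\sigma}{2}\|B_1y+B_2s-c\|^2$. $\Sigma_{f_1}$ (resp. $\Sigma_{f_2}$) is a self-adjoint positive semidefinite operator with $f_1(y)\ge f_1(\hat y)+\langle\hat\phi,y-\hat y\rangle+\frac12\|y-\hat y\|^2_{\Sigma_{f_1}}$ and $\langle\phi-\hat\phi,y-\hat y\rangle\ge\|y-\hat y\|^2_{\Sigma_{f_1}}$ for all $y,\hat y\in\operatorname{dom}f_1$, $\phi\in\partial f_1(y)$, $\hat\phi\in\partial f_1(\hat y)$ (same for $f_2$). Assumption 1: for $i=1,2$, $\operatorname{ri}(\operatorname{dom}f_i^* )\cap\operatorname{Range}(B_i^* )\ne\emptyset$; $\operatorname{ri}(\operatorname{dom}(f_1^*\circ(-B_1^* )))\cap\operatorname{ri}(\operatorname{dom}(f_2^*\circ(-B_2^* )))\ne\emptyset$; (P) has a solution. Assumption 2: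 $\Sigma_{f_1}+B_1^*B_1$ and $\Sigma_{f_2}+B_2^*B_2$ are positive definite. Algorithm B: input $y^0,x^0,\sigma$; $\hat x^0:=x^0$; for $k\ge0$: $s^{k+1}=\arg\min_s L_\sigma(y^k,s;\hat x^k)$; $x^{k+1/2}=\hat x^k+\sigma(B_1y^k+B_2s^{k+1}-c)$; $y^{k+1}=\arg\min_y L_\sigma(y,s^{k+1};x^{k+1/2})$; $x^{k+1}=x^{k+1/2}+\sigma(B_1y^{k+1}+B_2s^{k+1}-c)$; $\hat x^{k+1}=\frac{1}{k+2}\hat x^0+\frac{k+1}{k+2}x^{k+1}+\frac{\sigma}{k+2}[(B_1y^0-c)-(B_1y^{k+1}-c)]$. The sequence converges to $(y^*,s^*,x^* )$ with $(y^*,s^* )$ solving (P), $x^*$ solving (D). KKT residual: $\mathcal{R}(y,s,x):=\big(y-\operatorname{Prox}_{f_1}(y-B_1^*x);\ s-\operatorname{Prox}_{f_2}(s-B_2^*x);\ c-B_1y-B_2s\big)$, where $\operatorname{Prox}_f(z):=\arg\min_u\{f(u)+\frac12\|u-z\|^2\}$. $h(y,s):=f_1(y)+f_2(s)-f_1(y^* )-f_2(s^* )$. $\|B_2^*\|$ is the operator (spectral) norm. *)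

theory Defs
  imports "HOL-Analysis.Analysis"
begin

text \<open>An extended-real-valued proper closed convex function f : E \<rightarrow> (-\<infinity>,+\<infinity>] is represented
  by its (real) values on its effective domain D = dom f (value +\<infinity> outside D).\<close>

definition proper_closed_convex :: "('a::euclidean_space \<Rightarrow> real) \<Rightarrow> 'a set \<Rightarrow> bool" where
  "proper_closed_convex f D \<longleftrightarrow> D \<noteq> {} \<and> convex D \<and> convex_on D f \<and>
     closed {(y, t). y \<in> D \<and> f y \<le> t}"

definition subdiff :: "('a::euclidean_space \<Rightarrow> real) \<Rightarrow> 'a set \<Rightarrow> 'a \<Rightarrow> 'a set" where
  "subdiff f D y = {\<phi>. y \<in> D \<and> (\<forall>u\<in>D. f u \<ge> f y + inner \<phi> (u - y))}"

definition conj :: "('a::euclidean_space \<Rightarrow> real) \<Rightarrow> 'a set \<Rightarrow> 'a \<Rightarrow> ereal" where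
  "conj f D u = (SUP y\<in>D. ereal (inner u y - f y))"

definition conj_dom :: "('a::euclidean_space \<Rightarrow> real) \<Rightarrow> 'a set \<Rightarrow> 'a set" where
  "conj_dom f D = {u. conj f D u < \<infinity>}"

definition sqnorm_op :: "('a::euclidean_space \<Rightarrow> 'a) \<Rightarrow> 'a \<Rightarrow> real" where
  "sqnorm_op S v = inner v (S v)"

definition self_adj_psd :: "('a::euclidean_space \<Rightarrow> 'a) \<Rightarrow> bool" where
  "self_adj_psd S \<longleftrightarrow> linear S \<and> adjoint S = S \<and> (\<forall>v. inner v (S v) \<ge> 0)"

definition pos_def_op :: "('a::euclidean_space \<Rightarrow> 'a) \<Rightarrow> bool" where
  "pos_def_op S \<longleftrightarrow> (\<forall>v. v \<noteq> 0 \<longrightarrow> inner v (S v) > 0)"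

definition strong_cvx_op :: "('a::euclidean_space \<Rightarrow> real) \<Rightarrow> 'a set \<Rightarrow> ('a \<Rightarrow> 'a) \<Rightarrow> bool" where
  "strong_cvx_op f D S \<longleftrightarrow> self_adj_psd S \<and>
     (\<forall>y\<in>D. \<forall>yh\<in>D. \<forall>\<phi>\<in>subdiff f D y. \<forall>\<phi>h\<in>subdiff f D yh.
        f y \<ge> f yh + inner \<phi>h (y - yh) + 1/2 * sqnorm_op S (y - yh) \<and>
        inner (\<phi> - \<phi>h) (y - yh) \<ge> sqnorm_op S (y - yh))"

definition prox :: "('a::euclidean_space \<Rightarrow> real) \<Rightarrow> 'a set \<Rightarrow> 'a \<Rightarrow> 'a" where
  "prox f D z = (THE u. u \<in> D \<and> (\<forall>v\<in>D. f u + 1/2 * (norm (u - z))\<^sup>2 \<le> f v + 1/2 * (norm (v - z))\<^sup>2))"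

text \<open>Augmented Lagrangian (finite part; only evaluated on dom f1 \<times> dom f2).\<close>
definition aug_lag ::
  "('y::euclidean_space \<Rightarrow> real) \<Rightarrow> ('z::euclidean_space \<Rightarrow> real) \<Rightarrow> ('y \<Rightarrow> 'x::euclidean_space)
   \<Rightarrow> ('z \<Rightarrow> 'x) \<Rightarrow> 'x \<Rightarrow> real \<Rightarrow> 'y \<Rightarrow> 'z \<Rightarrow> 'x \<Rightarrow> real" where
  "aug_lag f1 f2 B1 B2 c \<sigma> y s x =
     f1 y + f2 s + inner x (B1 y + B2 s - c) + \<sigma>/2 * (norm (B1 y + B2 s - c))\<^sup>2"

definition kkt_res_norm ::
  "('y::euclidean_space \<Rightarrow> real) \<Rightarrow> 'y set \<Rightarrow> ('z::euclidean_space \<Rightarrow> real) \<Rightarrow> 'z set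
   \<Rightarrow> ('y \<Rightarrow> 'x::euclidean_space) \<Rightarrow> ('z \<Rightarrow> 'x) \<Rightarrow> 'x \<Rightarrow> 'y \<Rightarrow> 'z \<Rightarrow> 'x \<Rightarrow> real" where
  "kkt_res_norm f1 D1 f2 D2 B1 B2 c y s x =
     sqrt ((norm (y - prox f1 D1 (y - adjoint B1 x)))\<^sup>2
         + (norm (s - prox f2 D2 (s - adjoint B2 x)))\<^sup>2
         + (norm (c - B1 y - B2 s))\<^sup>2)"

definition primal_sol ::
  "('y::euclidean_space \<Rightarrow> real) \<Rightarrow> 'y set \<Rightarrow> ('z::euclidean_space \<Rightarrow> real) \<Rightarrow> 'z set
   \<Rightarrow> ('y \<Rightarrow> 'x::euclidean_space) \<Rightarrow> ('z \<Rightarrow> 'x) \<Rightarrow> 'x \<Rightarrow> 'y \<Rightarrow> 'z \<Rightarrow> bool" where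
  "primal_sol f1 D1 f2 D2 B1 B2 c y s \<longleftrightarrow> y \<in> D1 \<and> s \<in> D2 \<and> B1 y + B2 s = c \<and>
     (\<forall>y'\<in>D1. \<forall>s'\<in>D2. B1 y' + B2 s' = c \<longrightarrow> f1 y + f2 s \<le> f1 y' + f2 s')"

definition dual_obj ::
  "('y::euclidean_space \<Rightarrow> real) \<Rightarrow> 'y set \<Rightarrow> ('z::euclidean_space \<Rightarrow> real) \<Rightarrow> 'z set
   \<Rightarrow> ('y \<Rightarrow> 'x::euclidean_space) \<Rightarrow> ('z \<Rightarrow> 'x) \<Rightarrow> 'x \<Rightarrow> 'x \<Rightarrow> ereal" where
  "dual_obj f1 D1 f2 D2 B1 B2 c x =
     - conj f1 D1 (- adjoint B1 x) - conj f2 D2 (- adjoint B2 x) - ereal (inner c x)"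

definition dual_sol ::
  "('y::euclidean_space \<Rightarrow> real) \<Rightarrow> 'y set \<Rightarrow> ('z::euclidean_space \<Rightarrow> real) \<Rightarrow> 'z set
   \<Rightarrow> ('y \<Rightarrow> 'x::euclidean_space) \<Rightarrow> ('z \<Rightarrow> 'x) \<Rightarrow> 'x \<Rightarrow> 'x \<Rightarrow> bool" where
  "dual_sol f1 D1 f2 D2 B1 B2 c x \<longleftrightarrow>
     (\<forall>x'. dual_obj f1 D1 f2 D2 B1 B2 c x' \<le> dual_obj f1 D1 f2 D2 B1 B2 c x)"

end

theory Submission
  imports Defs
begin

text \<open>In the variable w = xh + \<sigma> (B1 y - c), Algorithm B is Halpern's iteration
  w(k+1) = w(0)/(k+2) + (k+1)/(k+2) T(w(k)) for the Douglas-Rachford operator T of the dual, which is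
  nonexpansive by monotonicity of the subdifferentials of f1 and f2 and fixes x* + \<sigma> (B1 y* - c).
  The Lyapunov argument for Halpern's iteration gives |w(k) - T(w(k))| \<le> 2 |w(0) - w*| / (k+1),
  and w(k) - T(w(k)) = -2\<sigma> (B1 y(k+1) + B2 s(k+1) - c) is the primal residual. The KKT residual
  and both bounds on the objective gap then follow from the subgradient inequalities at the iterates
  and at the KKT point (y*, s*, x*), which the limit is by closedness of the epigraphs.\<close>

lemma nonpos_if_le_small_multiples:
  fixes a K :: real
  assumes K: "K \<ge> 0" and le: "\<And>t. 0 < t \<Longrightarrow> t \<le> 1 \<Longrightarrow> a \<le> t * K"
  shows "a \<le> 0"
proof (rule ccontr)
  assume "\<not> a \<le> 0"
  hence a: "a > 0" by simp
  define t where "t = min 1 (a / (2 * K + 1))"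
  have t: "0 < t" "t \<le> 1" using a K by (simp_all add: t_def)
  have "t * K \<le> a / (2 * K + 1) * K" using K by (intro mult_right_mono) (simp_all add: t_def)
  also have "\<dots> < a" using a K by (simp add: divide_less_eq algebra_simps add_pos_nonneg)
  finally show False using le[OF t] by simp
qed

lemma subdiff_monotone:
  assumes "\<phi> \<in> subdiff f D u" and "\<psi> \<in> subdiff f D v"
  shows "inner (\<phi> - \<psi>) (u - v) \<ge> 0"
proof -
  have "f v \<ge> f u + inner \<phi> (v - u)" "f u \<ge> f v + inner \<psi> (u - v)"
    using assms by (auto simp: subdiff_def)
  then show ?thesis by (simp add: inner_diff_left inner_diff_right algebra_simps)
qed

text \<open>First-order optimality: comparing u with the points of the segment towards v, the quadratic
  term contributes only O(t^2).\<close>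

lemma subdiff_at_quadratic_min:
  fixes f :: "'a::euclidean_space \<Rightarrow> real" and A :: "'a \<Rightarrow> 'b::euclidean_space"
  assumes cvx: "convex_on D f" and A: "linear A" and \<sigma>: "\<sigma> \<ge> 0" and u: "u \<in> D"
    and min: "\<forall>v\<in>D. f u + inner p (A u) + \<sigma>/2 * (norm (A u + e))\<^sup>2
                   \<le> f v + inner p (A v) + \<sigma>/2 * (norm (A v + e))\<^sup>2"
  shows "- adjoint A (p + \<sigma> *\<^sub>R (A u + e)) \<in> subdiff f D u"
proof -
  have "f v \<ge> f u - inner (p + \<sigma> *\<^sub>R (A u + e)) (A (v - u))" if v: "v \<in> D" for v
  proof -
    define d where "d = A (v - u)"
    define a where "a = f u - f v - inner (p + \<sigma> *\<^sub>R (A u + e)) d"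
    have "a \<le> 0"
    proof (rule nonpos_if_le_small_multiples[of "\<sigma>/2 * (norm d)\<^sup>2"])
      show "0 \<le> \<sigma>/2 * (norm d)\<^sup>2" using \<sigma> by simp
      fix t :: real assume t0: "0 < t" and t1: "t \<le> 1"
      define ut where "ut = (1 - t) *\<^sub>R u + t *\<^sub>R v"
      have "ut \<in> D"
        unfolding ut_def using cvx u v t0 t1 by (simp add: convex_on_def convexD)
      then have m: "f u + inner p (A u) + \<sigma>/2 * (norm (A u + e))\<^sup>2
          \<le> f ut + inner p (A ut) + \<sigma>/2 * (norm (A ut + e))\<^sup>2"
        using min by blast
      have fut: "f ut \<le> (1 - t) * f u + t * f v"
        unfolding ut_def using convex_onD[OF cvx] t0 t1 u v by simp
      have Aut: "A ut = A u + t *\<^sub>R d"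
        unfolding ut_def d_def using A by (simp add: linear_add linear_scale linear_diff algebra_simps)
      have nq: "(norm (A ut + e))\<^sup>2 = (norm (A u + e))\<^sup>2 + 2 * t * inner (A u + e) d + t\<^sup>2 * (norm d)\<^sup>2"
        unfolding Aut power2_norm_eq_inner
        by (simp add: inner_add_left inner_add_right inner_commute power2_eq_square algebra_simps)
      have "f u \<le> f ut + t * inner p d + \<sigma>/2 * (2 * t * inner (A u + e) d + t\<^sup>2 * (norm d)\<^sup>2)"
        using m unfolding nq by (simp add: Aut inner_add_right algebra_simps)
      moreover have "inner (p + \<sigma> *\<^sub>R (A u + e)) d = inner p d + \<sigma> * inner (A u + e) d"
        by (simp add: inner_add_left)
      ultimately have "t * a \<le> t * (t * (\<sigma>/2 * (norm d)\<^sup>2))"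
        using fut unfolding a_def by (simp add: algebra_simps power2_eq_square)
      thus "a \<le> t * (\<sigma>/2 * (norm d)\<^sup>2)" using t0 by simp
    qed
    thus ?thesis unfolding a_def d_def by simp
  qed
  with u show ?thesis by (simp add: subdiff_def adjoint_clauses[OF A])
qed

definition prox_minimizer :: "('a::euclidean_space \<Rightarrow> real) \<Rightarrow> 'a set \<Rightarrow> 'a \<Rightarrow> 'a \<Rightarrow> bool" where
  "prox_minimizer f D z u \<longleftrightarrow>
     u \<in> D \<and> (\<forall>v\<in>D. f u + 1/2 * (norm (u - z))\<^sup>2 \<le> f v + 1/2 * (norm (v - z))\<^sup>2)"

lemma prox_eq_The_minimizer: "prox f D z = (THE u. prox_minimizer f D z u)"
  by (simp add: prox_def prox_minimizer_def)

lemma adjoint_id: "adjoint (\<lambda>v::'a::euclidean_space. v) = (\<lambda>v. v)"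
  by (rule adjoint_unique) simp

lemma subdiff_at_prox_minimizer:
  assumes cvx: "convex_on D f" and min: "prox_minimizer f D z u"
  shows "z - u \<in> subdiff f D u"
proof -
  have "- adjoint (\<lambda>v. v) (0 + 1 *\<^sub>R (u + - z)) \<in> subdiff f D u"
    using min unfolding prox_minimizer_def
    by (intro subdiff_at_quadratic_min[OF cvx]) (auto simp: linear_id[unfolded id_def])
  then show ?thesis by (simp add: adjoint_id)
qed

lemma prox_eqI:
  assumes cvx: "convex_on D f" and min: "prox_minimizer f D z u"
  shows "prox f D z = u"
  unfolding prox_eq_The_minimizer
proof (rule the_equality)
  show "prox_minimizer f D z u" by (fact min)
  fix u' assume min': "prox_minimizer f D z u'"
  have "inner ((z - u') - (z - u)) (u' - u) \<ge> 0"
    by (rule subdiff_monotone[OF subdiff_at_prox_minimizer[OF cvx min'] subdiff_at_prox_minimizer[OF cvx min]])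
  hence "inner (u - u') (u' - u) \<ge> 0" by simp
  hence "inner (u' - u) (u' - u) \<le> 0" by (metis inner_minus_left minus_diff_eq neg_0_le_iff_le)
  hence "inner (u' - u) (u' - u) = 0" using inner_ge_zero[of "u' - u"] by linarith
  thus "u' = u" by simp
qed

lemma prox_minimizer_of_subdiff:
  assumes "\<phi> \<in> subdiff f D u"
  shows "prox_minimizer f D (u + \<phi>) u"
  unfolding prox_minimizer_def
proof (intro conjI ballI)
  show "u \<in> D" using assms by (simp add: subdiff_def)
  fix v assume "v \<in> D"
  then have "f v \<ge> f u + inner \<phi> (v - u)" using assms by (simp add: subdiff_def)
  moreover have "(norm (v - (u + \<phi>)))\<^sup>2 = (norm (v - u))\<^sup>2 - 2 * inner \<phi> (v - u) + (norm \<phi>)\<^sup>2"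
    unfolding power2_norm_eq_inner
    by (simp add: inner_diff_left inner_diff_right inner_add_left inner_add_right inner_commute)
  moreover have "(norm (u - (u + \<phi>)))\<^sup>2 = (norm \<phi>)\<^sup>2" and "(norm (v - u))\<^sup>2 \<ge> 0" by simp_all
  ultimately show "f u + 1/2 * (norm (u - (u + \<phi>)))\<^sup>2 \<le> f v + 1/2 * (norm (v - (u + \<phi>)))\<^sup>2"
    by linarith
qed

lemma prox_of_subdiff:
  assumes "convex_on D f" and "\<phi> \<in> subdiff f D u"
  shows "prox f D (u + \<phi>) = u"
  using prox_eqI prox_minimizer_of_subdiff assms by blast

text \<open>The affine minorant given by \<phi> makes the sublevel sets of t + |u - z|^2/2 on the epigraph
  bounded.\<close>

lemma bounded_prox_sublevel:
  assumes sg: "\<phi> \<in> subdiff f D u0"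
  shows "bounded {(u, t). u \<in> D \<and> f u \<le> t \<and> t + 1/2 * (norm (u - z))\<^sup>2 \<le> M}"
proof -
  define C where "C = M - f u0 + inner \<phi> (u0 - z) + 1/2 * (norm \<phi>)\<^sup>2"
  define r where "r = sqrt (2 * C)"
  define lo where "lo = f u0 - norm \<phi> * (r + norm (z - \<phi> - u0))"
  have "{(u, t). u \<in> D \<and> f u \<le> t \<and> t + 1/2 * (norm (u - z))\<^sup>2 \<le> M} \<subseteq> cball (z - \<phi>) r \<times> {lo..M}"
  proof safe
    fix u t assume uD: "u \<in> D" and fu: "f u \<le> t" and tM: "t + 1/2 * (norm (u - z))\<^sup>2 \<le> M"
    have fl: "f u \<ge> f u0 + inner \<phi> (u - u0)" using sg uD by (simp add: subdiff_def)
    have "(norm (u - (z - \<phi>)))\<^sup>2 = (norm (u - z))\<^sup>2 + 2 * inner \<phi> (u - u0) + 2 * inner \<phi> (u0 - z) + (norm \<phi>)\<^sup>2"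
      unfolding power2_norm_eq_inner
      by (simp add: inner_diff_left inner_diff_right inner_add_left inner_add_right inner_commute algebra_simps)
    with fl fu tM have "(norm (u - (z - \<phi>)))\<^sup>2 \<le> 2 * C" unfolding C_def by (simp add: algebra_simps)
    hence nr: "norm (u - (z - \<phi>)) \<le> r" unfolding r_def by (simp add: real_le_rsqrt)
    thus "u \<in> cball (z - \<phi>) r" by (simp add: dist_norm norm_minus_commute)
    have "norm (u - u0) \<le> r + norm (z - \<phi> - u0)"
      using norm_triangle_ineq[of "u - (z - \<phi>)" "z - \<phi> - u0"] nr by simp
    hence "norm \<phi> * norm (u - u0) \<le> norm \<phi> * (r + norm (z - \<phi> - u0))"
      by (simp add: mult_left_mono)
    moreover have "- inner \<phi> (u - u0) \<le> norm \<phi> * norm (u - u0)"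
      using Cauchy_Schwarz_ineq2[of \<phi> "u - u0"] by (simp add: abs_le_iff)
    ultimately have "lo \<le> t" unfolding lo_def using fl fu by linarith
    moreover have "t \<le> M" using tM zero_le_power2[of "norm (u - z)"] by linarith
    ultimately show "t \<in> {lo..M}" by simp
  qed
  then show ?thesis by (rule bounded_subset[rotated]) (intro bounded_Times bounded_cball bounded_closed_interval)
qed

lemma prox_minimizer_exists:
  assumes pcc: "proper_closed_convex f D" and sg: "\<phi> \<in> subdiff f D u0"
  shows "\<exists>u. prox_minimizer f D z u"
proof -
  define \<Phi> where "\<Phi> = (\<lambda>p::'a \<times> real. snd p + 1/2 * (norm (fst p - z))\<^sup>2)"
  define M where "M = \<Phi> (u0, f u0)"
  define K where "K = {(u, t). u \<in> D \<and> f u \<le> t \<and> t + 1/2 * (norm (u - z))\<^sup>2 \<le> M}"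
  have cont: "continuous_on UNIV \<Phi>" unfolding \<Phi>_def by (intro continuous_intros)
  have "K = {(u, t). u \<in> D \<and> f u \<le> t} \<inter> {p. \<Phi> p \<le> M}"
    by (auto simp: K_def \<Phi>_def)
  moreover have "closed {p. \<Phi> p \<le> M}"
    using cont by (intro closed_Collect_le continuous_intros) auto
  ultimately have "closed K"
    using pcc by (auto intro: closed_Int simp: proper_closed_convex_def)
  moreover have "bounded K" unfolding K_def by (rule bounded_prox_sublevel[OF sg])
  ultimately have "compact K" by (simp add: compact_eq_bounded_closed)
  moreover have "(u0, f u0) \<in> K" unfolding K_def M_def \<Phi>_def using sg by (simp add: subdiff_def)
  ultimately obtain p where pK: "p \<in> K" and pmin: "\<forall>q\<in>K. \<Phi> p \<le> \<Phi> q"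
    using continuous_attains_inf[OF _ _ continuous_on_subset[OF cont subset_UNIV]] by blast
  obtain us ts where p: "p = (us, ts)" by (cases p)
  have "prox_minimizer f D z us"
    unfolding prox_minimizer_def
  proof (intro conjI ballI)
    show "us \<in> D" using pK p by (simp add: K_def)
    fix v assume v: "v \<in> D"
    have "\<Phi> (us, ts) \<le> \<Phi> (v, f v)"
    proof (cases "\<Phi> (v, f v) \<le> M")
      case True
      with v have "(v, f v) \<in> K" by (simp add: K_def \<Phi>_def)
      with pmin p show ?thesis by blast
    next
      case False
      with pK p show ?thesis by (simp add: K_def \<Phi>_def)
    qed
    thus "f us + 1/2 * (norm (us - z))\<^sup>2 \<le> f v + 1/2 * (norm (v - z))\<^sup>2"
      using pK p unfolding \<Phi>_def K_def by simp
  qed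
  then show ?thesis ..
qed

lemma prox_dist_le:
  assumes pcc: "proper_closed_convex f D" and sg: "\<phi> \<in> subdiff f D u"
  shows "norm (u - prox f D (u + \<psi>)) \<le> norm (\<psi> - \<phi>)"
proof -
  have cvx: "convex_on D f" using pcc by (simp add: proper_closed_convex_def)
  obtain m where min: "prox_minimizer f D (u + \<psi>) m"
    using prox_minimizer_exists[OF pcc sg] by blast
  have "inner (((u + \<psi>) - m) - \<phi>) (m - u) \<ge> 0"
    by (rule subdiff_monotone[OF subdiff_at_prox_minimizer[OF cvx min] sg])
  moreover have "inner (((u + \<psi>) - m) - \<phi>) (m - u) = inner (\<psi> - \<phi>) (m - u) - (norm (m - u))\<^sup>2"
    unfolding power2_norm_eq_inner
    by (simp add: inner_diff_left inner_diff_right inner_add_left inner_add_right inner_commute algebra_simps)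
  moreover have "inner (\<psi> - \<phi>) (m - u) \<le> norm (\<psi> - \<phi>) * norm (m - u)"
    by (rule norm_cauchy_schwarz)
  ultimately have "(norm (m - u))\<^sup>2 \<le> norm (\<psi> - \<phi>) * norm (m - u)" by linarith
  hence "norm (m - u) \<le> norm (\<psi> - \<phi>)"
    by (cases "norm (m - u) = 0") (simp_all add: power2_eq_square)
  thus ?thesis using prox_eqI[OF cvx min] by (simp add: norm_minus_commute)
qed

lemma subdiff_limit:
  assumes pcc: "proper_closed_convex f D" and sg: "\<And>k. \<phi> k \<in> subdiff f D (u k)"
    and u: "u \<longlonglongrightarrow> us" and \<phi>: "\<phi> \<longlonglongrightarrow> \<phi>s" and us: "us \<in> D"
  shows "\<phi>s \<in> subdiff f D us"
proof -
  define E where "E = {(y, t). y \<in> D \<and> f y \<le> t}"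
  have "f v \<ge> f us + inner \<phi>s (v - us)" if v: "v \<in> D" for v
  proof -
    have "(u k, f v - inner (\<phi> k) (v - u k)) \<in> E" for k
      using sg[of k] v unfolding E_def subdiff_def by fastforce
    moreover have "(\<lambda>k. (u k, f v - inner (\<phi> k) (v - u k))) \<longlonglongrightarrow> (us, f v - inner \<phi>s (v - us))"
      by (intro tendsto_intros u \<phi>)
    moreover have "closed E" using pcc unfolding proper_closed_convex_def E_def by blast
    ultimately have "(us, f v - inner \<phi>s (v - us)) \<in> E"
      using closed_sequentially[of E "\<lambda>k. (u k, f v - inner (\<phi> k) (v - u k))"] by blast
    thus ?thesis unfolding E_def by simp
  qed
  with us show ?thesis by (simp add: subdiff_def)
qed

lemma cocoercive_of_nonexpansive:
  fixes w w' t t' :: "'a::real_inner"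
  assumes "norm (t' - t) \<le> norm (w' - w)"
  shows "inner ((w' - t') - (w - t)) (w' - w) \<ge> 1/2 * (norm ((w' - t') - (w - t)))\<^sup>2"
proof -
  define dw where "dw = w' - w"
  define dg where "dg = (w' - t') - (w - t)"
  have "t' - t = dw - dg" unfolding dw_def dg_def by (simp add: algebra_simps)
  with assms have "(norm (dw - dg))\<^sup>2 \<le> (norm dw)\<^sup>2"
    unfolding dw_def[symmetric] by (simp add: power_mono)
  moreover have "(norm (dw - dg))\<^sup>2 = (norm dw)\<^sup>2 - 2 * inner dg dw + (norm dg)\<^sup>2"
    unfolding power2_norm_eq_inner by (simp add: inner_diff_left inner_diff_right inner_commute)
  ultimately show ?thesis unfolding dw_def[symmetric] dg_def[symmetric] by linarith
qed

text \<open>One step of the Lyapunov argument for Halpern's iteration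
  w' = w0/(n+2) + (n+1)/(n+2) (w - g), where g = w - T w and g' = w' - T w'.\<close>

lemma halpern_potential_step:
  fixes w0 w w' g g' :: "'a::real_inner" and n :: real
  assumes n: "n \<ge> 0"
    and upd: "w' = (1/(n+2)) *\<^sub>R w0 + ((n+1)/(n+2)) *\<^sub>R (w - g)"
    and coco: "inner (g' - g) (w' - w) \<ge> 1/2 * (norm (g' - g))\<^sup>2"
  shows "(n+1)*(n+2)/2 * (norm g')\<^sup>2 + (n+2) * inner g' (w' - w0)
         \<le> n*(n+1)/2 * (norm g)\<^sup>2 + (n+1) * inner g (w - w0)"
proof -
  define d where "d = w - w0"
  have np: "n + 2 > 0" using n by simp
  have "1/(n+2) + (n+1)/(n+2) = 1" using np by (simp add: field_simps)
  then have split: "(1/(n+2)) *\<^sub>R v + ((n+1)/(n+2)) *\<^sub>R v = v" for v :: 'a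
    by (simp only: scaleR_left_distrib[symmetric] scaleR_one)
  have e1: "w' - w0 = ((n+1)/(n+2)) *\<^sub>R (d - g)"
    unfolding upd d_def using split by (simp add: algebra_simps scaleR_diff_right)
  have "w' - w = (-(1/(n+2))) *\<^sub>R d - ((n+1)/(n+2)) *\<^sub>R g"
    unfolding upd d_def using split[of w] by (simp add: algebra_simps)
  then have e2: "(n+2) *\<^sub>R (w' - w) = - d - (n+1) *\<^sub>R g"
    using np by (simp add: scaleR_diff_right)
  define P where "P = inner g' d"
  define Q where "Q = inner g d"
  define G0 where "G0 = inner g g"
  define G1 where "G1 = inner g' g'"
  define Mx where "Mx = inner g' g"
  have "(n+2) * inner (g' - g) (w' - w) = inner (g' - g) ((n+2) *\<^sub>R (w' - w))" by simp
  also have "\<dots> = -(P - Q) - (n+1)*(Mx - G0)"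
    unfolding e2 P_def Q_def Mx_def G0_def by (simp add: inner_diff_left inner_diff_right algebra_simps)
  finally have c1: "(n+2) * inner (g' - g) (w' - w) = -(P - Q) - (n+1)*(Mx - G0)" .
  have c2: "(norm (g' - g))\<^sup>2 = G1 - 2*Mx + G0"
    unfolding power2_norm_eq_inner G1_def Mx_def G0_def
    by (simp add: inner_diff_left inner_diff_right inner_commute)
  have "(n+2) * (1/2 * (norm (g' - g))\<^sup>2) \<le> (n+2) * inner (g' - g) (w' - w)"
    using coco np by (simp add: mult_left_mono)
  hence "(n+2)/2*(G1 - 2*Mx + G0) \<le> -(P - Q) - (n+1)*(Mx - G0)"
    unfolding c1 c2 by simp
  hence "(n+2)/2*G1 + P - Mx - n/2*G0 - Q \<le> 0"
    by (simp add: field_simps)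
  hence "(n+1) * ((n+2)/2*G1 + P - Mx - n/2*G0 - Q) \<le> 0"
    using n by (simp add: mult_nonneg_nonpos)
  moreover have "(n+2) * inner g' (w' - w0) = (n+1) * (P - Mx)"
    unfolding e1 P_def Mx_def using np by (simp add: inner_diff_right)
  moreover have "(norm g')\<^sup>2 = G1" "(norm g)\<^sup>2 = G0" "inner g (w - w0) = Q"
    unfolding G1_def G0_def Q_def d_def by (simp_all add: power2_norm_eq_inner)
  ultimately show ?thesis by (simp add: algebra_simps)
qed

lemma halpern_potential_nonpos:
  fixes w T :: "nat \<Rightarrow> 'a::real_inner"
  assumes upd: "\<And>k. w (Suc k) = (1/(real k+2)) *\<^sub>R w 0 + ((real k+1)/(real k+2)) *\<^sub>R T k"
    and nonexp: "\<And>k. norm (T (Suc k) - T k) \<le> norm (w (Suc k) - w k)"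
  shows "real k * (real k+1)/2 * (norm (w k - T k))\<^sup>2 + (real k+1) * inner (w k - T k) (w k - w 0) \<le> 0"
proof (induction k)
  case (Suc k)
  have "(real k+1)*(real k+2)/2 * (norm (w (Suc k) - T (Suc k)))\<^sup>2
        + (real k+2) * inner (w (Suc k) - T (Suc k)) (w (Suc k) - w 0)
     \<le> real k*(real k+1)/2 * (norm (w k - T k))\<^sup>2 + (real k+1) * inner (w k - T k) (w k - w 0)"
    by (rule halpern_potential_step[OF _ _ cocoercive_of_nonexpansive[OF nonexp[of k]]]) (simp_all add: upd)
  with Suc.IH show ?case by (simp add: algebra_simps)
qed simp

lemma halpern_bounded:
  fixes w T :: "nat \<Rightarrow> 'a::real_normed_vector"
  assumes upd: "\<And>k. w (Suc k) = (1/(real k+2)) *\<^sub>R w 0 + ((real k+1)/(real k+2)) *\<^sub>R T k"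
    and quasi: "\<And>k. norm (T k - ws) \<le> norm (w k - ws)"
  shows "norm (w k - ws) \<le> norm (w 0 - ws)"
proof (induction k)
  case (Suc k)
  define \<alpha> where "\<alpha> = 1/(real k+2)"
  define \<beta> where "\<beta> = (real k+1)/(real k+2)"
  have ab: "\<alpha> + \<beta> = 1" unfolding \<alpha>_def \<beta>_def by (simp add: field_simps)
  have a0: "\<alpha> \<ge> 0" and b0: "\<beta> \<ge> 0" unfolding \<alpha>_def \<beta>_def by simp_all
  have "ws = \<alpha> *\<^sub>R ws + \<beta> *\<^sub>R ws" using ab by (metis scaleR_left_distrib scaleR_one)
  then have "w (Suc k) - ws = \<alpha> *\<^sub>R (w 0 - ws) + \<beta> *\<^sub>R (T k - ws)"
    unfolding upd \<alpha>_def[symmetric] \<beta>_def[symmetric] by (simp add: algebra_simps)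
  hence "norm (w (Suc k) - ws) \<le> \<alpha> * norm (w 0 - ws) + \<beta> * norm (T k - ws)"
    using a0 b0 by (metis (no_types, lifting) abs_of_nonneg norm_scaleR norm_triangle_ineq)
  also have "\<dots> \<le> \<alpha> * norm (w 0 - ws) + \<beta> * norm (w 0 - ws)"
    using quasi[of k] Suc b0 by (simp add: mult_left_mono)
  also have "\<dots> = norm (w 0 - ws)" using ab by (metis distrib_right mult_1)
  finally show ?case .
qed simp

lemma halpern_residual_rate:
  fixes w T :: "nat \<Rightarrow> 'a::real_inner"
  assumes upd: "\<And>k. w (Suc k) = (1/(real k+2)) *\<^sub>R w 0 + ((real k+1)/(real k+2)) *\<^sub>R T k"
    and nonexp: "\<And>k. norm (T (Suc k) - T k) \<le> norm (w (Suc k) - w k)"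
    and quasi: "\<And>k. norm (T k - ws) \<le> norm (w k - ws)"
  shows "norm (w k - T k) \<le> 2 * norm (w 0 - ws) / (real k + 1)"
proof -
  define G where "G = norm (w k - T k)"
  define R where "R = norm (w 0 - ws)"
  define n where "n = real k"
  have n0: "n \<ge> 0" unfolding n_def by simp
  have "inner (w k - T k) (w k - ws) \<ge> 1/2 * G\<^sup>2"
    using cocoercive_of_nonexpansive[OF quasi[of k]] unfolding G_def by simp
  moreover have "inner (w k - T k) (w 0 - ws) \<le> G * R"
    unfolding G_def R_def by (rule norm_cauchy_schwarz)
  moreover have "inner (w k - T k) (w k - w 0) = inner (w k - T k) (w k - ws) - inner (w k - T k) (w 0 - ws)"
    by (simp add: inner_diff_right)
  ultimately have "(n+1) * inner (w k - T k) (w k - w 0) \<ge> (n+1) * (1/2 * G\<^sup>2 - G * R)"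
    using n0 by (intro mult_left_mono) auto
  with halpern_potential_nonpos[OF upd nonexp, of k]
  have "n*(n+1)/2 * G\<^sup>2 + (n+1) * (1/2 * G\<^sup>2 - G * R) \<le> 0"
    unfolding n_def[symmetric] G_def[symmetric] by linarith
  then have "(n+1) * (G * ((n+1)/2 * G - R)) \<le> 0"
    by (simp add: field_simps power2_eq_square)
  then have "G * ((n+1)/2 * G - R) \<le> 0"
    using n0 by (simp add: mult_le_0_iff)
  moreover have "G \<ge> 0" "R \<ge> 0" unfolding G_def R_def by simp_all
  ultimately have "(n+1)/2 * G - R \<le> 0 \<or> G = 0"
    by (auto simp: mult_le_0_iff)
  then have "G \<le> 2 * R / (n+1)"
    using n0 \<open>R \<ge> 0\<close> by (auto simp: field_simps)
  thus ?thesis unfolding G_def R_def n_def .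
qed

text \<open>With X = xh1 - xh2, a = \<sigma> B2 (s1 - s2) and b = \<sigma> B1 (y1 - y2), monotonicity of the two
  subdifferentials gives \<langle>X, a\<rangle> \<le> 0 and \<langle>X + a + b, b\<rangle> \<le> 0, while
  |X + a + 2b|^2 = |X - a|^2 + 4\<langle>X, a\<rangle> + 4\<langle>X + a + b, b\<rangle>.\<close>

lemma admm_step_nonexpansive:
  fixes B1 :: "'y::euclidean_space \<Rightarrow> 'x::euclidean_space" and B2 :: "'z::euclidean_space \<Rightarrow> 'x"
  assumes B1: "linear B1" and B2: "linear B2" and \<sigma>: "\<sigma> \<ge> 0"
    and h1: "xh1 = w1 + \<sigma> *\<^sub>R B2 s1" and h2: "xh2 = w2 + \<sigma> *\<^sub>R B2 s2"
    and p1: "xp1 = xh1 + \<sigma> *\<^sub>R (B1 y1 + B2 s1 - c)" and p2: "xp2 = xh2 + \<sigma> *\<^sub>R (B1 y2 + B2 s2 - c)"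
    and s1: "- adjoint B2 xh1 \<in> subdiff f2 D2 s1" and s2: "- adjoint B2 xh2 \<in> subdiff f2 D2 s2"
    and y1: "- adjoint B1 xp1 \<in> subdiff f1 D1 y1" and y2: "- adjoint B1 xp2 \<in> subdiff f1 D1 y2"
  shows "norm ((xp1 + \<sigma> *\<^sub>R (B1 y1 - c)) - (xp2 + \<sigma> *\<^sub>R (B1 y2 - c))) \<le> norm (w1 - w2)"
proof -
  define X where "X = xh1 - xh2"
  define a where "a = \<sigma> *\<^sub>R (B2 s1 - B2 s2)"
  define b where "b = \<sigma> *\<^sub>R (B1 y1 - B1 y2)"
  have "inner ((- adjoint B2 xh1) - (- adjoint B2 xh2)) (s1 - s2) \<ge> 0"
    by (rule subdiff_monotone[OF s1 s2])
  moreover have "inner ((- adjoint B2 xh1) - (- adjoint B2 xh2)) (s1 - s2) = - inner X (B2 s1 - B2 s2)"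
    unfolding X_def
    by (simp add: inner_diff_left inner_diff_right adjoint_clauses[OF B2] linear_diff[OF B2])
  ultimately have Xa: "inner X a \<le> 0"
    unfolding a_def using \<sigma> by (simp add: mult_nonneg_nonpos)
  have dxp: "xp1 - xp2 = X + a + b"
    unfolding X_def a_def b_def p1 p2 by (simp add: algebra_simps)
  have "inner ((- adjoint B1 xp1) - (- adjoint B1 xp2)) (y1 - y2) \<ge> 0"
    by (rule subdiff_monotone[OF y1 y2])
  moreover have "inner ((- adjoint B1 xp1) - (- adjoint B1 xp2)) (y1 - y2) = - inner (xp1 - xp2) (B1 y1 - B1 y2)"
    by (simp add: inner_diff_left inner_diff_right adjoint_clauses[OF B1] linear_diff[OF B1])
  ultimately have "inner (xp1 - xp2) b \<le> 0"
    unfolding b_def using \<sigma> by (simp add: mult_nonneg_nonpos)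
  hence Xab: "inner (X + a + b) b \<le> 0" unfolding dxp .
  have "(norm (X + a + 2 *\<^sub>R b))\<^sup>2 = (norm (X - a))\<^sup>2 + 4 * inner X a + 4 * inner (X + a + b) b"
    unfolding power2_norm_eq_inner
    by (simp add: inner_add_left inner_add_right inner_diff_left inner_diff_right inner_commute algebra_simps)
  with Xa Xab have "(norm (X + a + 2 *\<^sub>R b))\<^sup>2 \<le> (norm (X - a))\<^sup>2" by linarith
  then have "norm (X + a + 2 *\<^sub>R b) \<le> norm (X - a)" using power2_le_imp_le by fastforce
  moreover have "(xp1 + \<sigma> *\<^sub>R (B1 y1 - c)) - (xp2 + \<sigma> *\<^sub>R (B1 y2 - c)) = (xp1 - xp2) + b"
    unfolding b_def by (simp add: algebra_simps)
  moreover have "w1 - w2 = X - a" unfolding X_def a_def h1 h2 by (simp add: algebra_simps)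
  ultimately show ?thesis unfolding dxp by (simp add: scaleR_2 add.assoc)
qed

locale halpern_admm =
  fixes f1 :: "'y::euclidean_space \<Rightarrow> real" and D1 :: "'y set"
    and f2 :: "'z::euclidean_space \<Rightarrow> real" and D2 :: "'z set"
    and B1 :: "'y \<Rightarrow> 'x::euclidean_space" and B2 :: "'z \<Rightarrow> 'x" and c :: 'x
    and \<sigma> :: real
    and y :: "nat \<Rightarrow> 'y" and s :: "nat \<Rightarrow> 'z"
    and x :: "nat \<Rightarrow> 'x" and xh :: "nat \<Rightarrow> 'x" and xhalf :: "nat \<Rightarrow> 'x"
  assumes f1: "proper_closed_convex f1 D1" and f2: "proper_closed_convex f2 D2"
    and B1: "linear B1" and B2: "linear B2"
    and sig: "\<sigma> > 0" and xh0: "xh 0 = x 0"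
    and s_step: "\<And>k. s (Suc k) \<in> D2 \<and>
        (\<forall>s'\<in>D2. aug_lag f1 f2 B1 B2 c \<sigma> (y k) (s (Suc k)) (xh k)
                   \<le> aug_lag f1 f2 B1 B2 c \<sigma> (y k) s' (xh k))"
    and xhalf_step: "\<And>k. xhalf k = xh k + \<sigma> *\<^sub>R (B1 (y k) + B2 (s (Suc k)) - c)"
    and y_step: "\<And>k. y (Suc k) \<in> D1 \<and>
        (\<forall>y'\<in>D1. aug_lag f1 f2 B1 B2 c \<sigma> (y (Suc k)) (s (Suc k)) (xhalf k)
                   \<le> aug_lag f1 f2 B1 B2 c \<sigma> y' (s (Suc k)) (xhalf k))"
    and x_step: "\<And>k. x (Suc k) = xhalf k + \<sigma> *\<^sub>R (B1 (y (Suc k)) + B2 (s (Suc k)) - c)"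
    and xh_step: "\<And>k. xh (Suc k) = (1 / (real k + 2)) *\<^sub>R xh 0
        + ((real k + 1) / (real k + 2)) *\<^sub>R x (Suc k)
        + (\<sigma> / (real k + 2)) *\<^sub>R ((B1 (y 0) - c) - (B1 (y (Suc k)) - c))"
begin

lemma s_subdiff: "- adjoint B2 (xhalf k) \<in> subdiff f2 D2 (s (Suc k))"
proof -
  have lag: "aug_lag f1 f2 B1 B2 c \<sigma> (y k) s' (xh k)
      = f2 s' + inner (xh k) (B2 s') + \<sigma>/2 * (norm (B2 s' + (B1 (y k) - c)))\<^sup>2
        + (f1 (y k) + inner (xh k) (B1 (y k) - c))" for s'
    by (simp add: aug_lag_def inner_add_right inner_diff_right algebra_simps)
  have "- adjoint B2 (xh k + \<sigma> *\<^sub>R (B2 (s (Suc k)) + (B1 (y k) - c))) \<in> subdiff f2 D2 (s (Suc k))"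
    using s_step[of k] f2 sig unfolding lag
    by (intro subdiff_at_quadratic_min[OF _ B2]) (simp_all add: proper_closed_convex_def)
  then show ?thesis by (simp add: xhalf_step algebra_simps)
qed

lemma y_subdiff: "- adjoint B1 (x (Suc k)) \<in> subdiff f1 D1 (y (Suc k))"
proof -
  have lag: "aug_lag f1 f2 B1 B2 c \<sigma> y' (s (Suc k)) (xhalf k)
      = f1 y' + inner (xhalf k) (B1 y') + \<sigma>/2 * (norm (B1 y' + (B2 (s (Suc k)) - c)))\<^sup>2
        + (f2 (s (Suc k)) + inner (xhalf k) (B2 (s (Suc k)) - c))" for y'
    by (simp add: aug_lag_def inner_add_right inner_diff_right algebra_simps)
  have "- adjoint B1 (xhalf k + \<sigma> *\<^sub>R (B1 (y (Suc k)) + (B2 (s (Suc k)) - c)))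
        \<in> subdiff f1 D1 (y (Suc k))"
    using y_step[of k] f1 sig unfolding lag
    by (intro subdiff_at_quadratic_min[OF _ B1]) (simp_all add: proper_closed_convex_def)
  then show ?thesis by (simp add: x_step algebra_simps)
qed

definition primal_res :: "nat \<Rightarrow> 'x" where
  "primal_res k = B1 (y (Suc k)) + B2 (s (Suc k)) - c"

text \<open>Tw k = T(w(k)) for the Douglas-Rachford operator T.\<close>

definition w :: "nat \<Rightarrow> 'x" where
  "w k = xh k + \<sigma> *\<^sub>R (B1 (y k) - c)"

definition Tw :: "nat \<Rightarrow> 'x" where
  "Tw k = x (Suc k) + \<sigma> *\<^sub>R (B1 (y (Suc k)) - c)"

lemma x_Suc_eq: "x (Suc k) = xhalf k + \<sigma> *\<^sub>R primal_res k"
  unfolding primal_res_def by (rule x_step)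

lemma xhalf_eq: "xhalf k = w k + \<sigma> *\<^sub>R B2 (s (Suc k))"
  unfolding w_def xhalf_step by (simp add: algebra_simps)

lemma w_Suc: "w (Suc k) = (1/(real k+2)) *\<^sub>R w 0 + ((real k+1)/(real k+2)) *\<^sub>R Tw k"
proof -
  define n where "n = real k"
  define P0 where "P0 = B1 (y 0) - c"
  define P1 where "P1 = B1 (y (Suc k)) - c"
  have "w (Suc k) = (1/(n+2)) *\<^sub>R x 0 + ((n+1)/(n+2)) *\<^sub>R x (Suc k)
      + ((\<sigma>/(n+2)) *\<^sub>R (P0 - P1) + \<sigma> *\<^sub>R P1)"
    unfolding w_def xh_step xh0 n_def P0_def P1_def by (simp add: algebra_simps)
  also have "(\<sigma>/(n+2)) *\<^sub>R (P0 - P1) + \<sigma> *\<^sub>R P1 = (\<sigma>/(n+2)) *\<^sub>R P0 + (\<sigma> - \<sigma>/(n+2)) *\<^sub>R P1"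
    by (simp add: scaleR_diff_right scaleR_diff_left)
  also have "\<sigma> - \<sigma>/(n+2) = (n+1)/(n+2) * \<sigma>"
    unfolding n_def by (simp add: field_simps)
  finally show ?thesis
    unfolding w_def Tw_def xh0 n_def P0_def P1_def by (simp add: scaleR_add_right algebra_simps)
qed

lemma Tw_nonexpansive: "norm (Tw (Suc k) - Tw k) \<le> norm (w (Suc k) - w k)"
  unfolding Tw_def using sig
  by (intro admm_step_nonexpansive[OF B1 B2 _ xhalf_eq xhalf_eq x_step x_step
        s_subdiff s_subdiff y_subdiff y_subdiff]) simp

lemma w_minus_Tw: "w k - Tw k = (- (2 * \<sigma>)) *\<^sub>R primal_res k"
proof -
  have "(\<sigma> * 2) *\<^sub>R v = \<sigma> *\<^sub>R v + \<sigma> *\<^sub>R v" for v :: 'x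
    by (metis mult.commute scaleR_2 scaleR_scaleR)
  then show ?thesis
    unfolding Tw_def x_Suc_eq xhalf_eq by (simp add: primal_res_def algebra_simps)
qed

text \<open>The limit is a KKT point.\<close>

lemma saddle_point_of_limit:
  assumes y: "y \<longlonglongrightarrow> ys" and s: "s \<longlonglongrightarrow> ss" and x: "x \<longlonglongrightarrow> xs"
    and ys: "ys \<in> D1" and ss: "ss \<in> D2" and feasible: "B1 ys + B2 ss = c"
  shows "- adjoint B1 xs \<in> subdiff f1 D1 ys" and "- adjoint B2 xs \<in> subdiff f2 D2 ss"
proof -
  note lim_B1 = bounded_linear.tendsto[OF B1[unfolded linear_conv_bounded_linear]]
  note lim_B2 = bounded_linear.tendsto[OF B2[unfolded linear_conv_bounded_linear]]
  note lim_adj1 = bounded_linear.tendsto[OF adjoint_linear[OF B1, unfolded linear_conv_bounded_linear]]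
  note lim_adj2 = bounded_linear.tendsto[OF adjoint_linear[OF B2, unfolded linear_conv_bounded_linear]]
  have ySuc: "(\<lambda>k. y (Suc k)) \<longlonglongrightarrow> ys" and sSuc: "(\<lambda>k. s (Suc k)) \<longlonglongrightarrow> ss"
    and xSuc: "(\<lambda>k. x (Suc k)) \<longlonglongrightarrow> xs"
    using y s x by (simp_all add: LIMSEQ_Suc)
  have "primal_res \<longlonglongrightarrow> B1 ys + B2 ss - c"
    unfolding primal_res_def by (intro tendsto_intros lim_B1 lim_B2 ySuc sSuc)
  then have "(\<lambda>k. x (Suc k) - \<sigma> *\<^sub>R primal_res k) \<longlonglongrightarrow> xs - \<sigma> *\<^sub>R 0"
    unfolding feasible by (intro tendsto_intros xSuc) simp
  then have xhalf: "xhalf \<longlonglongrightarrow> xs" by (simp add: x_Suc_eq)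
  show "- adjoint B1 xs \<in> subdiff f1 D1 ys"
    by (rule subdiff_limit[OF f1 y_subdiff ySuc _ ys]) (intro tendsto_intros lim_adj1 xSuc)
  show "- adjoint B2 xs \<in> subdiff f2 D2 ss"
    by (rule subdiff_limit[OF f2 s_subdiff sSuc _ ss]) (intro tendsto_intros lim_adj2 xhalf)
qed

end

locale halpern_admm_saddle = halpern_admm +
  fixes ys ss xs
  assumes feasible: "B1 ys + B2 ss = c"
    and saddle_y: "- adjoint B1 xs \<in> subdiff f1 D1 ys"
    and saddle_s: "- adjoint B2 xs \<in> subdiff f2 D2 ss"
begin

definition w_star where
  "w_star = xs + \<sigma> *\<^sub>R (B1 ys - c)"

definition init_dist :: real where
  "init_dist = norm (x 0 - xs) + \<sigma> * norm (B1 (y 0) - B1 ys)"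

lemma Tw_quasi_nonexpansive: "norm (Tw k - w_star) \<le> norm (w k - w_star)"
proof -
  have "xs = w_star + \<sigma> *\<^sub>R B2 ss" and "xs = xs + \<sigma> *\<^sub>R (B1 ys + B2 ss - c)"
    unfolding w_star_def unfolding feasible[symmetric] by (simp_all add: algebra_simps)
  then have "norm ((x (Suc k) + \<sigma> *\<^sub>R (B1 (y (Suc k)) - c)) - (xs + \<sigma> *\<^sub>R (B1 ys - c)))
      \<le> norm (w k - w_star)"
    using sig by (intro admm_step_nonexpansive[OF B1 B2 _ xhalf_eq _ x_step _
        s_subdiff saddle_s y_subdiff saddle_y]) simp_all
  then show ?thesis by (simp add: Tw_def w_star_def)
qed

lemma w_dist_le: "norm (w k - w_star) \<le> init_dist"
proof -
  have "w 0 - w_star = (x 0 - xs) + \<sigma> *\<^sub>R (B1 (y 0) - B1 ys)"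
    unfolding w_def w_star_def xh0 by (simp add: algebra_simps)
  then have "norm (w 0 - w_star) \<le> init_dist"
    unfolding init_dist_def using sig norm_triangle_ineq[of "x 0 - xs" "\<sigma> *\<^sub>R (B1 (y 0) - B1 ys)"]
    by simp
  with halpern_bounded[OF w_Suc Tw_quasi_nonexpansive] show ?thesis by (rule order_trans)
qed

lemma primal_res_le: "norm (primal_res k) \<le> init_dist / (\<sigma> * (real k + 1))"
proof -
  have "2 * \<sigma> * norm (primal_res k) = norm (w k - Tw k)"
    using sig by (simp add: w_minus_Tw)
  also have "\<dots> \<le> 2 * norm (w 0 - w_star) / (real k + 1)"
    by (rule halpern_residual_rate[OF w_Suc Tw_nonexpansive Tw_quasi_nonexpansive])
  also have "\<dots> \<le> 2 * init_dist / (real k + 1)"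
    using w_dist_le[of 0] by (simp add: divide_right_mono)
  finally have "norm (primal_res k) * (\<sigma> * (real k + 1)) \<le> init_dist"
    using sig by (simp add: field_simps)
  then show ?thesis using sig by (simp add: pos_le_divide_eq)
qed

lemma kkt_res_le:
  "kkt_res_norm f1 D1 f2 D2 B1 B2 c (y (Suc k)) (s (Suc k)) (x (Suc k))
     \<le> 1 / (real k + 1) * ((\<sigma> * onorm (adjoint B2) + 1) / \<sigma> * init_dist)"
proof -
  define \<rho> where "\<rho> = norm (primal_res k)"
  define E where "E = norm (s (Suc k) - prox f2 D2 (s (Suc k) - adjoint B2 (x (Suc k))))"
  have bl: "bounded_linear (adjoint B2)"
    using adjoint_linear[OF B2] by (simp add: linear_conv_bounded_linear)
  have "prox f1 D1 (y (Suc k) - adjoint B1 (x (Suc k))) = y (Suc k)"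
    using prox_of_subdiff[OF _ y_subdiff] f1 by (simp add: proper_closed_convex_def)
  moreover have "norm (c - B1 (y (Suc k)) - B2 (s (Suc k))) = \<rho>"
    unfolding \<rho>_def primal_res_def by (metis diff_diff_eq minus_diff_eq norm_minus_cancel)
  ultimately have "kkt_res_norm f1 D1 f2 D2 B1 B2 c (y (Suc k)) (s (Suc k)) (x (Suc k))
      = sqrt (E\<^sup>2 + \<rho>\<^sup>2)"
    unfolding kkt_res_norm_def E_def by simp
  also have "\<dots> \<le> sqrt ((E + \<rho>)\<^sup>2)"
    unfolding \<rho>_def E_def by (intro real_sqrt_le_mono) (simp add: power2_eq_square algebra_simps)
  also have "\<dots> = E + \<rho>" unfolding \<rho>_def E_def by simp
  also have "E \<le> norm ((- adjoint B2 (x (Suc k))) - (- adjoint B2 (xhalf k)))"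
    using prox_dist_le[OF f2 s_subdiff[of k], where \<psi> = "- adjoint B2 (x (Suc k))"]
    unfolding E_def by simp
  also have "(- adjoint B2 (x (Suc k))) - (- adjoint B2 (xhalf k)) = - adjoint B2 (\<sigma> *\<^sub>R primal_res k)"
    unfolding x_Suc_eq by (simp add: linear_add[OF adjoint_linear[OF B2]])
  also have "norm (- adjoint B2 (\<sigma> *\<^sub>R primal_res k)) = norm (adjoint B2 (\<sigma> *\<^sub>R primal_res k))"
    by (rule norm_minus_cancel)
  also have "\<dots> \<le> onorm (adjoint B2) * (\<sigma> * \<rho>)"
    using onorm[OF bl, of "\<sigma> *\<^sub>R primal_res k"] sig unfolding \<rho>_def by simp
  also have "onorm (adjoint B2) * (\<sigma> * \<rho>) + \<rho> = (\<sigma> * onorm (adjoint B2) + 1) * \<rho>"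
    by (simp add: algebra_simps)
  also have "\<dots> \<le> (\<sigma> * onorm (adjoint B2) + 1) * (init_dist / (\<sigma> * (real k + 1)))"
    using primal_res_le[of k] onorm_pos_le[OF bl] sig unfolding \<rho>_def by (intro mult_left_mono) auto
  finally show ?thesis using sig by (simp add: field_simps)
qed

lemma objective_gap_ge: "f1 (y (Suc k)) + f2 (s (Suc k)) - f1 ys - f2 ss
    \<ge> - (1 / (real k + 1) * (norm xs / \<sigma> * init_dist))"
proof -
  have "f1 (y (Suc k)) \<ge> f1 ys - inner xs (B1 (y (Suc k)) - B1 ys)"
    using saddle_y y_step[of k] by (simp add: subdiff_def adjoint_clauses[OF B1] linear_diff[OF B1])
  moreover have "f2 (s (Suc k)) \<ge> f2 ss - inner xs (B2 (s (Suc k)) - B2 ss)"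
    using saddle_s s_step[of k] by (simp add: subdiff_def adjoint_clauses[OF B2] linear_diff[OF B2])
  moreover have "inner xs (B1 (y (Suc k)) - B1 ys) + inner xs (B2 (s (Suc k)) - B2 ss) = inner xs (primal_res k)"
    unfolding primal_res_def unfolding feasible[symmetric] by (simp add: inner_diff_right inner_add_right)
  moreover have "inner xs (primal_res k) \<le> norm xs * (init_dist / (\<sigma> * (real k + 1)))"
    using norm_cauchy_schwarz[of xs "primal_res k"] primal_res_le[of k]
    by (meson mult_left_mono norm_ge_zero order_trans)
  ultimately show ?thesis by (simp add: field_simps)
qed

lemma objective_gap_le: "f1 (y (Suc k)) + f2 (s (Suc k)) - f1 ys - f2 ss
    \<le> 1 / (real k + 1) * ((init_dist\<^sup>2 + norm xs * init_dist) / \<sigma>)"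
proof -
  define r where "r = primal_res k"
  define \<rho> where "\<rho> = norm r"
  have "f1 ys \<ge> f1 (y (Suc k)) - inner (x (Suc k)) (B1 ys - B1 (y (Suc k)))"
    using y_subdiff[of k] saddle_y by (simp add: subdiff_def adjoint_clauses[OF B1] linear_diff[OF B1])
  moreover have "f2 ss \<ge> f2 (s (Suc k)) - inner (xhalf k) (B2 ss - B2 (s (Suc k)))"
    using s_subdiff[of k] saddle_s by (simp add: subdiff_def adjoint_clauses[OF B2] linear_diff[OF B2])
  moreover have "inner (x (Suc k)) (B1 ys - B1 (y (Suc k))) + inner (xhalf k) (B2 ss - B2 (s (Suc k)))
      = - inner r (w k - w_star) - inner r xs - \<sigma> * inner r r"
  proof -
    have eq1: "B1 ys - B1 (y (Suc k)) = - r + B2 (s (Suc k)) - B2 ss"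
      and eq2: "w_star = xs - \<sigma> *\<^sub>R B2 ss"
      unfolding r_def primal_res_def w_star_def unfolding feasible[symmetric]
      by (simp_all add: algebra_simps)
    show ?thesis unfolding x_Suc_eq xhalf_eq r_def[symmetric] eq1 eq2
      by (simp add: inner_add_left inner_add_right inner_diff_left inner_diff_right inner_commute
          algebra_simps)
  qed
  moreover have "- inner r (w k - w_star) \<le> \<rho> * init_dist"
    using norm_cauchy_schwarz[of "- r" "w k - w_star"] w_dist_le[of k]
    unfolding \<rho>_def by (simp add: mult_left_mono order_trans)
  moreover have "- inner r xs \<le> \<rho> * norm xs"
    using norm_cauchy_schwarz[of "- r" xs] unfolding \<rho>_def by simp
  moreover have "\<sigma> * inner r r \<ge> 0" using sig by simp
  ultimately have "f1 (y (Suc k)) + f2 (s (Suc k)) - f1 ys - f2 ss \<le> \<rho> * (init_dist + norm xs)"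
    by (simp add: algebra_simps)
  also have "\<dots> \<le> init_dist / (\<sigma> * (real k + 1)) * (init_dist + norm xs)"
    using primal_res_le[of k] unfolding \<rho>_def r_def by (intro mult_right_mono) (auto simp: init_dist_def sig less_imp_le)
  finally show ?thesis using sig by (simp add: field_simps power2_eq_square)
qed

end

theorem theorem3p6:
  fixes f1 :: "'y::euclidean_space \<Rightarrow> real" and D1 :: "'y set"
    and f2 :: "'z::euclidean_space \<Rightarrow> real" and D2 :: "'z set"
    and B1 :: "'y \<Rightarrow> 'x::euclidean_space" and B2 :: "'z \<Rightarrow> 'x" and c :: 'x
    and S1 :: "'y \<Rightarrow> 'y" and S2 :: "'z \<Rightarrow> 'z"
    and \<sigma> :: real
    and y :: "nat \<Rightarrow> 'y" and s :: "nat \<Rightarrow> 'z"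
    and x :: "nat \<Rightarrow> 'x" and xh :: "nat \<Rightarrow> 'x" and xhalf :: "nat \<Rightarrow> 'x"
    and ys :: 'y and ss :: 'z and xs :: 'x
  assumes f1: "proper_closed_convex f1 D1" and f2: "proper_closed_convex f2 D2"
    and B1: "linear B1" and B2: "linear B2"
    and S1: "strong_cvx_op f1 D1 S1" and S2: "strong_cvx_op f2 D2 S2"
    \<comment> \<open>Assumption 1\<close>
    and A1a: "rel_interior (conj_dom f1 D1) \<inter> range (adjoint B1) \<noteq> {}"
    and A1b: "rel_interior (conj_dom f2 D2) \<inter> range (adjoint B2) \<noteq> {}"
    and A1c: "rel_interior {u. - adjoint B1 u \<in> conj_dom f1 D1}
              \<inter> rel_interior {u. - adjoint B2 u \<in> conj_dom f2 D2} \<noteq> {}"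
    and A1d: "\<exists>yp sp. primal_sol f1 D1 f2 D2 B1 B2 c yp sp"
    \<comment> \<open>Assumption 2\<close>
    and A2a: "pos_def_op (\<lambda>v. S1 v + adjoint B1 (B1 v))"
    and A2b: "pos_def_op (\<lambda>v. S2 v + adjoint B2 (B2 v))"
    \<comment> \<open>Algorithm B\<close>
    and sig: "\<sigma> > 0" and y0: "y 0 \<in> D1" and xh0: "xh 0 = x 0"
    and s_step: "\<And>k. s (Suc k) \<in> D2 \<and>
        (\<forall>s'\<in>D2. aug_lag f1 f2 B1 B2 c \<sigma> (y k) (s (Suc k)) (xh k)
                   \<le> aug_lag f1 f2 B1 B2 c \<sigma> (y k) s' (xh k))"
    and xhalf_step: "\<And>k. xhalf k = xh k + \<sigma> *\<^sub>R (B1 (y k) + B2 (s (Suc k)) - c)"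
    and y_step: "\<And>k. y (Suc k) \<in> D1 \<and>
        (\<forall>y'\<in>D1. aug_lag f1 f2 B1 B2 c \<sigma> (y (Suc k)) (s (Suc k)) (xhalf k)
                   \<le> aug_lag f1 f2 B1 B2 c \<sigma> y' (s (Suc k)) (xhalf k))"
    and x_step: "\<And>k. x (Suc k) = xhalf k + \<sigma> *\<^sub>R (B1 (y (Suc k)) + B2 (s (Suc k)) - c)"
    and xh_step: "\<And>k. xh (Suc k) = (1 / (real k + 2)) *\<^sub>R xh 0
        + ((real k + 1) / (real k + 2)) *\<^sub>R x (Suc k)
        + (\<sigma> / (real k + 2)) *\<^sub>R ((B1 (y 0) - c) - (B1 (y (Suc k)) - c))"
    \<comment> \<open>the limit of the iterates, which solves (P) and (D)\<close>
    and lim_y: "y \<longlonglongrightarrow> ys" and lim_s: "s \<longlonglongrightarrow> ss" and lim_x: "x \<longlonglongrightarrow> xs"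
    and sol_P: "primal_sol f1 D1 f2 D2 B1 B2 c ys ss"
    and sol_D: "dual_sol f1 D1 f2 D2 B1 B2 c xs"
  shows "\<forall>k. kkt_res_norm f1 D1 f2 D2 B1 B2 c (y (Suc k)) (s (Suc k)) (x (Suc k))
              \<le> 1 / (real k + 1) * ((\<sigma> * onorm (adjoint B2) + 1) / \<sigma>
                   * (norm (x 0 - xs) + \<sigma> * norm (B1 (y 0) - B1 ys)))
           \<and> f1 (y (Suc k)) + f2 (s (Suc k)) - f1 ys - f2 ss
              \<ge> - (1 / (real k + 1) * (norm xs / \<sigma>
                   * (norm (x 0 - xs) + \<sigma> * norm (B1 (y 0) - B1 ys))))
           \<and> f1 (y (Suc k)) + f2 (s (Suc k)) - f1 ys - f2 ss
              \<le> 1 / (real k + 1) * (((norm (x 0 - xs) + \<sigma> * norm (B1 (y 0) - B1 ys))\<^sup>2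
                   + norm xs * (norm (x 0 - xs) + \<sigma> * norm (B1 (y 0) - B1 ys))) / \<sigma>)"
proof -
  have admm: "halpern_admm f1 D1 f2 D2 B1 B2 c \<sigma> y s x xh xhalf"
    by (rule halpern_admm.intro) (fact assms)+
  interpret halpern_admm f1 D1 f2 D2 B1 B2 c \<sigma> y s x xh xhalf by (fact admm)
  have ys: "ys \<in> D1" and ss: "ss \<in> D2" and feasible: "B1 ys + B2 ss = c"
    using sol_P by (auto simp: primal_sol_def)
  note saddle = saddle_point_of_limit[OF lim_y lim_s lim_x ys ss feasible]
  interpret halpern_admm_saddle f1 D1 f2 D2 B1 B2 c \<sigma> y s x xh xhalf ys ss xs
    by (intro halpern_admm_saddle.intro[OF admm] halpern_admm_saddle_axioms.intro) (fact feasible saddle)+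
  show ?thesis
    using kkt_res_le objective_gap_ge objective_gap_le unfolding init_dist_def by blast
qed

end
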